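(* Let $\mathcal{X}$ be a sample space and $\mathcal{Y}$ a finite label space, let $(\boldsymbol{x}^n, \mathbf{y}^n) \in \mathcal{X} \times \mathcal{Y}$, $n = 1, \ldots, \ell$, be training instances, let $\Delta: \mathcal{Y} \times \mathcal{Y} \to \mathbb{R}_{\ge 0}$ satisfy $\Delta(\mathbf{y}, \mathbf{y}) = 0$ for all $\mathbf{y}$, let $\Psi: \mathcal{X} \times \mathcal{Y} \to \mathbb{R}^d$, and let $C > 0$. Writing $\hat{\boldsymbol{w}} = (\boldsymbol{w}, b) \in \mathbb{R}^{d} \times \mathbb{R}$ and $\hat{\Psi}(\boldsymbol{x}, \mathbf{y}) = (\Psi(\boldsymbol{x}, \mathbf{y}), 1) \in \mathbb{R}^{d+1}$, consider the two optimization problems over $(\hat{\boldsymbol{w}}, \boldsymbol{\xi}) \in \mathbb{R}^{d+1} \times \mathbb{R}^{\ell}$: $(P_2)$: minimize $\|\boldsymbol{w}\|^2 + C \sum_{n=1}^{\ell} \xi_n$ subject to $\hat{\boldsymbol{w}}^\top \hat{\Psi}(\boldsymbol{x}^n, \mathbf{y}^n) - \hat{\boldsymbol{w}}^\top \hat{\Psi}(\boldsymbol{x}^n, \mathbf{y}) + \xi_n \ge \Delta(\mathbf{y}^n, \mathbf{y})$ for all $n = 1, \ldots, \ell$ and all $\mathbf{y} \in \mathcal{Y}$; $(P_3)$: minimize the same objective subject to the same constraints together with the additional constraints $\hat{\boldsymbol{w}}^\top \hat{\Psi}(\boldsymbol{x}^n, \mathbf{y}) \ge 0$ for all $n = 1,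 \ldots, \ell$ and all $\mathbf{y} \in \mathcal{Y}$. If $(P_2)$ attains its minimum, then the optimal values of $(P_2)$ and $(P_3)$ are equal (and the minimum of $(P_3)$ is attained).
   Context: This is the structured SVM training problem with an additional unregularized bias coordinate $b$ (note the objective regularizes only $\boldsymbol{w}$, not $b$); $(P_3)$ additionally requires that all scores $\hat{\boldsymbol{w}}^\top \hat{\Psi}(\boldsymbol{x}^n, \mathbf{y})$ be nonnegative. *)

theory Defs
  imports "HOL-Analysis.Analysis"
begin

text \<open>Augmented score: hat w^T hat Psi(x,y) with hat w = (w,b), hat Psi(x,y) = (Psi(x,y),1).
  Training instances are indexed by n < l (i.e. n = 0..l-1 instead of 1..l).\<close>

definition score :: "('x \<Rightarrow> 'y \<Rightarrow> real^'d) \<Rightarrow> real^'d \<Rightarrow> real \<Rightarrow> 'x \<Rightarrow> 'y \<Rightarrow> real" where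
  "score Psi w b x y = w \<bullet> Psi x y + b"

definition svm_obj :: "real \<Rightarrow> nat \<Rightarrow> real^'d \<Rightarrow> (nat \<Rightarrow> real) \<Rightarrow> real" where
  "svm_obj C l w xi = (norm w)^2 + C * (\<Sum>n<l. xi n)"

definition feas_P2 ::
  "('x \<Rightarrow> 'y \<Rightarrow> real^'d) \<Rightarrow> ('y \<Rightarrow> 'y \<Rightarrow> real) \<Rightarrow> nat \<Rightarrow> (nat \<Rightarrow> 'x) \<Rightarrow> (nat \<Rightarrow> 'y)
    \<Rightarrow> real^'d \<Rightarrow> real \<Rightarrow> (nat \<Rightarrow> real) \<Rightarrow> bool" where
  "feas_P2 Psi Delta l xs ys w b xi \<longleftrightarrow>
     (\<forall>n<l. \<forall>y. score Psi w b (xs n) (ys n) - score Psi w b (xs n) y + xi n \<ge> Delta (ys n) y)"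

definition feas_P3 ::
  "('x \<Rightarrow> 'y \<Rightarrow> real^'d) \<Rightarrow> ('y \<Rightarrow> 'y \<Rightarrow> real) \<Rightarrow> nat \<Rightarrow> (nat \<Rightarrow> 'x) \<Rightarrow> (nat \<Rightarrow> 'y)
    \<Rightarrow> real^'d \<Rightarrow> real \<Rightarrow> (nat \<Rightarrow> real) \<Rightarrow> bool" where
  "feas_P3 Psi Delta l xs ys w b xi \<longleftrightarrow>
     feas_P2 Psi Delta l xs ys w b xi \<and> (\<forall>n<l. \<forall>y. score Psi w b (xs n) y \<ge> 0)"

end

theory Submission
  imports Defs
begin

text \<open>The bias b is unregularized and cancels in every margin constraint of (P2), so
  raising it by the largest negative score keeps a (P2) solution feasible at the same cost
  while making all scores nonnegative. Since (P3) only adds constraints, that solution is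
  optimal for (P3) as well.\<close>

lemma score_add_bias: "score Psi w (b + c) x y = score Psi w b x y + c"
  by (simp add: score_def)

lemma feas_P2_add_bias:
  "feas_P2 Psi Delta l xs ys w (b + c) xi \<longleftrightarrow> feas_P2 Psi Delta l xs ys w b xi"
  by (simp add: feas_P2_def score_add_bias)

lemma feas_P3_imp_feas_P2:
  "feas_P3 Psi Delta l xs ys w b xi \<Longrightarrow> feas_P2 Psi Delta l xs ys w b xi"
  by (simp add: feas_P3_def)

lemma exists_bias_scores_nonneg:
  fixes Psi :: "'x \<Rightarrow> 'y::finite \<Rightarrow> real^'d" and l :: nat
  shows "\<exists>c. \<forall>n<l. \<forall>y. score Psi w (b + c) (xs n) y \<ge> 0"
proof -
  define c where
    "c = Max (insert 0 ((\<lambda>(n, y). - score Psi w b (xs n) y) ` ({..<l} \<times> (UNIV :: 'y set))))"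
  have "score Psi w (b + c) (xs n) y \<ge> 0" if "n < l" for n y
  proof -
    have "- score Psi w b (xs n) y \<le> c"
      unfolding c_def by (rule Max_ge) (use that in force)+
    then show ?thesis
      by (simp add: score_add_bias)
  qed
  then show ?thesis
    by blast
qed

lemma feas_P2_imp_feas_P3_add_bias:
  fixes Psi :: "'x \<Rightarrow> 'y::finite \<Rightarrow> real^'d"
  assumes "feas_P2 Psi Delta l xs ys w b xi"
  shows "\<exists>c. feas_P3 Psi Delta l xs ys w (b + c) xi"
  using exists_bias_scores_nonneg[of l Psi w b xs] assms
  by (auto simp: feas_P3_def feas_P2_add_bias)

theorem claim2:
  fixes Psi :: "'x \<Rightarrow> 'y::finite \<Rightarrow> real^'d"
    and Delta :: "'y \<Rightarrow> 'y \<Rightarrow> real"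
    and xs :: "nat \<Rightarrow> 'x" and ys :: "nat \<Rightarrow> 'y"
    and l :: nat and C :: real
    and w0 :: "real^'d" and b0 :: real and xi0 :: "nat \<Rightarrow> real"
  assumes Delta_nonneg: "\<And>y y'. Delta y y' \<ge> 0"
    and Delta_diag: "\<And>y. Delta y y = 0"
    and C_pos: "C > 0"
    and P2_feas: "feas_P2 Psi Delta l xs ys w0 b0 xi0"
    and P2_min: "\<And>w b xi. feas_P2 Psi Delta l xs ys w b xi \<Longrightarrow> svm_obj C l w0 xi0 \<le> svm_obj C l w xi"
  shows "\<exists>w b xi. feas_P3 Psi Delta l xs ys w b xi \<and> svm_obj C l w xi = svm_obj C l w0 xi0 \<and>
           (\<forall>w' b' xi'. feas_P3 Psi Delta l xs ys w' b' xi' \<longrightarrow> svm_obj C l w xi \<le> svm_obj C l w' xi')"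
proof -
  obtain c where "feas_P3 Psi Delta l xs ys w0 (b0 + c) xi0"
    using feas_P2_imp_feas_P3_add_bias[OF P2_feas] ..
  moreover have "svm_obj C l w0 xi0 \<le> svm_obj C l w' xi'"
    if "feas_P3 Psi Delta l xs ys w' b' xi'" for w' b' xi'
    using P2_min feas_P3_imp_feas_P2[OF that] .
  ultimately show ?thesis
    by blast
qed

end
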